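(* Let $n\ge 2$. In the $(n,2,2)$ scenario with detection post-selection, the set $\tilde{\mathcal{L}}$ of post-selected correlators achievable by LHV models is strictly larger than the convex hull of the deterministic correlators $\tilde p(1|\mathbf{s})=\delta^1_{g(\mathbf{s})}$, $g$ ranging over linear Boolean functions on $\mathbf{s}$; that is, some LHV model with detection yields a post-selected correlator outside this convex hull.
   Context: $(n,2,2)$ scenario with imperfect detection: party $j$ receives input $s_j\in\{0,1\}$ and outputs two bits, a detection bit $t_j\in\{0,1\}$ ($1$ = detected) and an outcome $m_j\in\{0,1\}$. An LHV model is $p(\mathbf{t},\mathbf{m}|\mathbf{s})=\int p(\lambda)d\lambda\prod_{j}p(t_j,m_j|s_j,\lambda)$. Detection post-selection keeps only runs with $\mathbf{t}=(1,\dots,1)$; the post-selected correlator is $\tilde p(1|\mathbf{s})=p(\bigoplus_j m_j=1\mid\mathbf{s},\mathbf{t}=(1,\dots,1))$ (defined when the conditioning event has positive probability). A linear Boolean function on $\mathbf{s}$ is $g(\mathbf{s})=\big(\bigoplus_j a_j s_j\big)\oplus b$ with $a_j,b\in\{0,1\}$; $\oplus$ is addition mod 2. *)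

theory Defs
  imports "HOL-Probability.Probability"
begin

text \<open>Parties are indexed by j < n.
  Outputs of party j: a pair (t_j, m_j) :: bool \<times> bool, t_j = True meaning "detected".\<close>

definition inputs :: "nat \<Rightarrow> (nat \<Rightarrow> bool) set" where
  "inputs n = {s. \<forall>j. n \<le> j \<longrightarrow> s j = False}"

text \<open>An LHV model: hidden variable distribution P over lambda (taken to be nat-valued),
  and local response distributions r j lambda s_j = p(t_j, m_j | s_j, lambda).\<close>

definition lhv_joint ::
  "nat \<Rightarrow> nat pmf \<Rightarrow> (nat \<Rightarrow> nat \<Rightarrow> bool \<Rightarrow> (bool \<times> bool) pmf) \<Rightarrow> (nat \<Rightarrow> bool)
     \<Rightarrow> (nat \<Rightarrow> bool \<times> bool) pmf" where
  "lhv_joint n P r s = bind_pmf P (\<lambda>l. Pi_pmf {..<n} (False, False) (\<lambda>j. r j l (s j)))"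

definition all_detected :: "nat \<Rightarrow> (nat \<Rightarrow> bool \<times> bool) set" where
  "all_detected n = {x. \<forall>j<n. fst (x j)}"

definition parity_one :: "nat \<Rightarrow> (nat \<Rightarrow> bool \<times> bool) set" where
  "parity_one n = {x. x \<in> all_detected n \<and> odd (card {j\<in>{..<n}. snd (x j)})}"

definition postsel_corr ::
  "nat \<Rightarrow> nat pmf \<Rightarrow> (nat \<Rightarrow> nat \<Rightarrow> bool \<Rightarrow> (bool \<times> bool) pmf) \<Rightarrow> (nat \<Rightarrow> bool) \<Rightarrow> real" where
  "postsel_corr n P r s =
     measure_pmf.prob (lhv_joint n P r s) (parity_one n) /
     measure_pmf.prob (lhv_joint n P r s) (all_detected n)"

definition lin_bool :: "nat \<Rightarrow> (nat \<Rightarrow> bool) \<Rightarrow> bool \<Rightarrow> (nat \<Rightarrow> bool) \<Rightarrow> bool" where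
  "lin_bool n a b s = (odd (card {j\<in>{..<n}. a j \<and> s j}) \<noteq> b)"

definition det_corr :: "nat \<Rightarrow> (nat \<Rightarrow> bool) \<Rightarrow> bool \<Rightarrow> (nat \<Rightarrow> bool) \<Rightarrow> real" where
  "det_corr n a b s = (if lin_bool n a b s then 1 else 0)"

definition in_linear_hull :: "nat \<Rightarrow> ((nat \<Rightarrow> bool) \<Rightarrow> real) \<Rightarrow> bool" where
  "in_linear_hull n q \<longleftrightarrow>
     (\<exists>w :: (nat \<Rightarrow> bool) \<times> bool \<Rightarrow> real.
        (\<forall>ab \<in> inputs n \<times> UNIV. 0 \<le> w ab) \<and>
        (\<Sum>ab \<in> inputs n \<times> UNIV. w ab) = 1 \<and>
        (\<forall>s \<in> inputs n. q s = (\<Sum>(a,b) \<in> inputs n \<times> UNIV. w (a,b) * det_corr n a b s)))"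

end

theory Submission
  imports Defs
begin

text \<open>Take the CHSH combination q(00) + q(10) + q(01) - q(11) of a correlator q on the
  inputs where only the first two parties may receive 1. A deterministic linear correlator
  is 0/1-valued with q(11) = q(00) xor q(10) xor q(01), so the combination is at most 2,
  and by linearity the same bound holds on the convex hull. Post-selection breaks it:
  with a hidden variable uniform on five values, party 0 (resp. 1) clicks with outcome 1
  for two of them but refuses to be detected on input 1; the fifth value yields outcome 0
  for everyone. The post-selected correlator is 4/5, 2/3, 2/3, 0, with combination 32/15.\<close>

definition chsh :: "((nat \<Rightarrow> bool) \<Rightarrow> real) \<Rightarrow> (nat \<Rightarrow> bool) \<Rightarrow> (nat \<Rightarrow> bool) \<Rightarrow> (nat \<Rightarrow> bool)
    \<Rightarrow> (nat \<Rightarrow> bool) \<Rightarrow> real" where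
  "chsh q s00 s10 s01 s11 = q s00 + q s10 + q s01 - q s11"

lemma chsh_le_if_in_linear_hull:
  assumes "in_linear_hull n q"
    and "s00 \<in> inputs n" "s10 \<in> inputs n" "s01 \<in> inputs n" "s11 \<in> inputs n"
    and bound: "\<And>a b. a \<in> inputs n \<Longrightarrow> chsh (det_corr n a b) s00 s10 s01 s11 \<le> c"
  shows "chsh q s00 s10 s01 s11 \<le> c"
proof -
  let ?I = "inputs n \<times> (UNIV :: bool set)"
  obtain w where w_nonneg: "\<forall>ab \<in> ?I. 0 \<le> w ab" and w_sum: "(\<Sum>ab \<in> ?I. w ab) = 1"
    and q_eq: "\<forall>s \<in> inputs n. q s = (\<Sum>(a,b) \<in> ?I. w (a,b) * det_corr n a b s)"
    using assms(1) unfolding in_linear_hull_def by blast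
  have "chsh q s00 s10 s01 s11 = (\<Sum>(a,b) \<in> ?I. w (a,b) * chsh (det_corr n a b) s00 s10 s01 s11)"
    using q_eq assms(2-5)
    by (simp add: chsh_def case_prod_beta sum.distrib sum_subtractf algebra_simps)
  also have "\<dots> \<le> (\<Sum>(a,b) \<in> ?I. w (a,b) * c)"
    using w_nonneg bound by (intro sum_mono) (auto intro: mult_left_mono)
  also have "\<dots> = c"
    using w_sum by (simp add: case_prod_beta sum_distrib_right[symmetric])
  finally show ?thesis .
qed

definition two_party_input :: "bool \<Rightarrow> bool \<Rightarrow> nat \<Rightarrow> bool" where
  "two_party_input x y = (\<lambda>j. (j = 0 \<and> x) \<or> (j = 1 \<and> y))"

lemma two_party_input_in_inputs: "2 \<le> n \<Longrightarrow> two_party_input x y \<in> inputs n"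
  by (auto simp: two_party_input_def inputs_def)

lemma card_support_two_party_input:
  assumes "2 \<le> n"
  shows "card {j \<in> {..<n}. a j \<and> two_party_input x y j} =
           of_bool (a 0 \<and> x) + of_bool (a 1 \<and> y)"
proof -
  have "{j \<in> {..<n}. a j \<and> two_party_input x y j} =
          (if a 0 \<and> x then {0} else {}) \<union> (if a 1 \<and> y then {1} else {})"
    using assms by (auto simp: two_party_input_def)
  then show ?thesis by auto
qed

lemma chsh_det_corr_le_2:
  assumes "2 \<le> n"
  shows "chsh (det_corr n a b) (two_party_input False False) (two_party_input True False)
           (two_party_input False True) (two_party_input True True) \<le> 2"
  unfolding chsh_def det_corr_def lin_bool_def card_support_two_party_input[OF assms]
  by (cases "a 0"; cases "a 1"; cases b) auto

lemma lhv_joint_return_pmf: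
  "lhv_joint n P (\<lambda>j l b. return_pmf (f j l b)) s =
     map_pmf (\<lambda>l j. if j \<in> {..<n} then f j l (s j) else (False, False)) P"
  unfolding lhv_joint_def map_pmf_def by simp

definition model_response :: "nat \<Rightarrow> nat \<Rightarrow> bool \<Rightarrow> bool \<times> bool" where
  "model_response j l x =
     (if j = 0 \<and> l < 2 \<or> j = 1 \<and> 2 \<le> l \<and> l < 4 then (\<not> x, True) else (True, False))"

definition model_hidden :: "nat pmf" where
  "model_hidden = pmf_of_set {0..<5}"

definition model_local :: "nat \<Rightarrow> nat \<Rightarrow> bool \<Rightarrow> (bool \<times> bool) pmf" where
  "model_local j l x = return_pmf (model_response j l x)"

definition model_outcome :: "nat \<Rightarrow> (nat \<Rightarrow> bool) \<Rightarrow> nat \<Rightarrow> nat \<Rightarrow> bool \<times> bool" where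
  "model_outcome n s l = (\<lambda>j. if j \<in> {..<n} then model_response j l (s j) else (False, False))"

lemma prob_model:
  "measure_pmf.prob (lhv_joint n model_hidden model_local s) X =
     card ({0..<5} \<inter> model_outcome n s -` X) / 5"
proof -
  have "lhv_joint n model_hidden model_local s = map_pmf (model_outcome n s) model_hidden"
    unfolding model_local_def model_outcome_def by (rule lhv_joint_return_pmf)
  then have "measure_pmf.prob (lhv_joint n model_hidden model_local s) X =
               measure_pmf.prob model_hidden (model_outcome n s -` X)"
    by simp
  also have "\<dots> = card ({0..<5} \<inter> model_outcome n s -` X) / card {0..<5::nat}"
    unfolding model_hidden_def by (rule measure_pmf_of_set) auto
  finally show ?thesis by simp
qed

lemma model_outcome_all_detected_iff:
  assumes "2 \<le> n"
  shows "model_outcome n s l \<in> all_detected n \<longleftrightarrow>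
           (l < 2 \<longrightarrow> \<not> s 0) \<and> (2 \<le> l \<and> l < 4 \<longrightarrow> \<not> s 1)"
proof -
  have "model_outcome n s l \<in> all_detected n \<longleftrightarrow> (\<forall>j<n. fst (model_response j l (s j)))"
    by (simp add: all_detected_def model_outcome_def)
  also have "\<dots> \<longleftrightarrow> (\<forall>j\<in>{0, 1}. fst (model_response j l (s j)))"
    using assms by (auto simp: model_response_def)
  finally show ?thesis by (auto simp: model_response_def)
qed

lemma model_outcome_ones:
  assumes "2 \<le> n"
  shows "{j \<in> {..<n}. snd (model_outcome n s l j)} =
           (if l < 2 then {0} else if l < 4 then {1} else {})"
  using assms by (auto simp: model_outcome_def model_response_def)

lemma model_detected_hidden_values:
  assumes "2 \<le> n"
  shows "{0..<5} \<inter> model_outcome n s -` all_detected n =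
           (if s 0 then {} else {0, 1}) \<union> (if s 1 then {} else {2, 3}) \<union> {4}"
  using model_outcome_all_detected_iff[OF assms] by auto

lemma model_parity_one_hidden_values:
  assumes "2 \<le> n"
  shows "{0..<5} \<inter> model_outcome n s -` parity_one n =
           (if s 0 then {} else {0, 1}) \<union> (if s 1 then {} else {2, 3})"
  using model_outcome_all_detected_iff[OF assms] model_outcome_ones[OF assms]
  by (auto simp: parity_one_def)

lemma model_detection_pos:
  "2 \<le> n \<Longrightarrow> measure_pmf.prob (lhv_joint n model_hidden model_local s) (all_detected n) > 0"
  by (simp add: prob_model model_detected_hidden_values)

lemma chsh_model:
  assumes "2 \<le> n"
  shows "chsh (postsel_corr n model_hidden model_local)
           (two_party_input False False) (two_party_input True False)
           (two_party_input False True) (two_party_input True True) = 32 / 15"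
  using assms
  by (simp add: chsh_def postsel_corr_def prob_model model_detected_hidden_values
      model_parity_one_hidden_values two_party_input_def)

theorem proposition4p1p1:
  fixes n :: nat
  assumes "n \<ge> 2"
  shows "\<exists>(P :: nat pmf) (r :: nat \<Rightarrow> nat \<Rightarrow> bool \<Rightarrow> (bool \<times> bool) pmf).
           (\<forall>s \<in> inputs n. measure_pmf.prob (lhv_joint n P r s) (all_detected n) > 0) \<and>
           \<not> in_linear_hull n (postsel_corr n P r)"
proof (intro exI conjI ballI notI)
  show "measure_pmf.prob (lhv_joint n model_hidden model_local s) (all_detected n) > 0" for s
    using model_detection_pos[OF assms] .
next
  assume "in_linear_hull n (postsel_corr n model_hidden model_local)"
  then have "chsh (postsel_corr n model_hidden model_local)
               (two_party_input False False) (two_party_input True False)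
               (two_party_input False True) (two_party_input True True) \<le> 2"
    using assms by (auto intro!: chsh_le_if_in_linear_hull two_party_input_in_inputs chsh_det_corr_le_2)
  then show False
    using chsh_model[OF assms] by simp
qed

end
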